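(* Let $\tau$ be a continuous distributive triangle function on $\Delta^+$, $\Sigma$ a $\sigma$-ring of subsets of $\Omega\ne\emptyset$, $\gamma$ a $\tau$-decomposable measure on $\Sigma$ continuous from below, and $f:\Omega\to[0,+\infty]$ a measurable function that is $\gamma$-integrable on every $E\in\Sigma$. Then the set function $\nu^f:\Sigma\to\Delta^+$, $\nu^f_E:=\int_E f\,d\gamma$, is a $\tau$-decomposable measure.
   Context: $\Delta^+$: functions $F:[-\infty,+\infty]\to[0,1]$ non-decreasing, left-continuous on $\mathbb{R}$, $F(x)=0$ for $x\le0$, $F(+\infty)=1$, ordered pointwise; $\varepsilon_a(x)=1$ if $x>a$, else $0$. Triangle function: symmetric, associative $\tau:\Delta^+\times\Delta^+\to\Delta^+$, non-decreasing in each variable, identity $\varepsilon_0$; $G\oplus H=\tau(G,H)$, $\bigoplus_{k=1}^nG_k=\tau(G_1,\bigoplus_{k=2}^nG_k)$. $c\odot G=\varepsilon_0$ if $c=0$, $(c\odot G)(x)=G(x/c)$ if $c>0$; $\tau$ distributive if $c\odot(G\oplus H)=(c\odot G)\oplus(c\odot H)$ for all $c\ge0$. Convergence in $\Delta^+$ is weak convergence (at continuity points in $\mathbb{R}$ of the limit); $\tau$ continuous if continuous for it. $\tau$-decomposable measure on a ring $\Sigma$: $\gamma:\Sigma\to\Delta^+$, $\gamma_\emptyset=\varepsilon_0$, $\gamma_{E\cup F}=\tau(\gamma_E,\gamma_F)$ for disjoint $E,F$; continuous from below: $\gamma_{E_n}\to\gamma_E$ whenever $E_n\subseteq E_{n+1}$,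 $\bigcup E_n=E$ in $\Sigma$. Simple function $\sum_{i=1}^nx_i\chi_{E_i}$ ($x_i\in[0,\infty)$, $E_i\in\Sigma$ pairwise disjoint), $\int_Ef\,d\gamma=\bigoplus_{i}x_i\odot\gamma_{E\cap E_i}$. Measurable: pointwise limit of simple functions. $\mathcal S_{f,E}$: simple $\mathfrak f\le f$ on $E$. $f$ is $\gamma$-integrable on $E$ if some $H\in\Delta^+$ bounds $\int_E\mathfrak f\,d\gamma\ge H$ for all $\mathfrak f\in\mathcal S_{f,E}$; then $\int_Ef\,d\gamma=\inf\{\int_E\mathfrak f\,d\gamma:\mathfrak f\in\mathcal S_{f,E}\}$ in $(\Delta^+,\le)$. *)

theory Defs
  imports "HOL-Analysis.Analysis"
begin

type_synonym dist = "ereal \<Rightarrow> real"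

definition Delta_plus :: "dist set" where
  "Delta_plus = {F. (\<forall>x. 0 \<le> F x \<and> F x \<le> 1) \<and> mono F
     \<and> (\<forall>x::real. ((\<lambda>t::real. F (ereal t)) \<longlongrightarrow> F (ereal x)) (at_left x))
     \<and> (\<forall>x. x \<le> 0 \<longrightarrow> F x = 0) \<and> F PInfty = 1}"

definition eps :: "real \<Rightarrow> dist" where
  "eps a = (\<lambda>x. if x > ereal a then 1 else 0)"

definition triangle_function :: "(dist \<Rightarrow> dist \<Rightarrow> dist) \<Rightarrow> bool" where
  "triangle_function \<tau> \<longleftrightarrow>
     (\<forall>G\<in>Delta_plus. \<forall>H\<in>Delta_plus. \<tau> G H \<in> Delta_plus)
   \<and> (\<forall>G\<in>Delta_plus. \<forall>H\<in>Delta_plus. \<tau> G H = \<tau> H G)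
   \<and> (\<forall>G\<in>Delta_plus. \<forall>H\<in>Delta_plus. \<forall>K\<in>Delta_plus. \<tau> G (\<tau> H K) = \<tau> (\<tau> G H) K)
   \<and> (\<forall>G\<in>Delta_plus. \<forall>G'\<in>Delta_plus. \<forall>H\<in>Delta_plus. G \<le> G' \<longrightarrow> \<tau> G H \<le> \<tau> G' H)
   \<and> (\<forall>G\<in>Delta_plus. \<tau> G (eps 0) = G)"

definition smul :: "real \<Rightarrow> dist \<Rightarrow> dist" where
  "smul c G = (if c = 0 then eps 0 else (\<lambda>x. G (x / ereal c)))"

definition distributive_tf :: "(dist \<Rightarrow> dist \<Rightarrow> dist) \<Rightarrow> bool" where
  "distributive_tf \<tau> \<longleftrightarrow> (\<forall>c\<ge>0. \<forall>G\<in>Delta_plus. \<forall>H\<in>Delta_plus.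
      smul c (\<tau> G H) = \<tau> (smul c G) (smul c H))"

definition weak_conv :: "(nat \<Rightarrow> dist) \<Rightarrow> dist \<Rightarrow> bool" where
  "weak_conv Fs F \<longleftrightarrow> (\<forall>x::real. isCont (\<lambda>t::real. F (ereal t)) x \<longrightarrow>
      (\<lambda>n. Fs n (ereal x)) \<longlonglongrightarrow> F (ereal x))"

definition continuous_tf :: "(dist \<Rightarrow> dist \<Rightarrow> dist) \<Rightarrow> bool" where
  "continuous_tf \<tau> \<longleftrightarrow> (\<forall>Fs F Gs G. range Fs \<subseteq> Delta_plus \<and> F \<in> Delta_plus
      \<and> range Gs \<subseteq> Delta_plus \<and> G \<in> Delta_plus \<and> weak_conv Fs F \<and> weak_conv Gs G
      \<longrightarrow> weak_conv (\<lambda>n. \<tau> (Fs n) (Gs n)) (\<tau> F G))"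

definition sigma_ring :: "'a set \<Rightarrow> 'a set set \<Rightarrow> bool" where
  "sigma_ring \<Omega> \<Sigma> \<longleftrightarrow> ring_of_sets \<Omega> \<Sigma>
     \<and> (\<forall>A::nat \<Rightarrow> 'a set. range A \<subseteq> \<Sigma> \<longrightarrow> (\<Union>n. A n) \<in> \<Sigma>)"

definition decomposable_measure ::
  "(dist \<Rightarrow> dist \<Rightarrow> dist) \<Rightarrow> 'a set set \<Rightarrow> ('a set \<Rightarrow> dist) \<Rightarrow> bool" where
  "decomposable_measure \<tau> \<Sigma> \<gamma> \<longleftrightarrow> (\<forall>E\<in>\<Sigma>. \<gamma> E \<in> Delta_plus) \<and> \<gamma> {} = eps 0
     \<and> (\<forall>E\<in>\<Sigma>. \<forall>F\<in>\<Sigma>. E \<inter> F = {} \<longrightarrow> \<gamma> (E \<union> F) = \<tau> (\<gamma> E) (\<gamma> F))"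

definition cont_from_below :: "'a set set \<Rightarrow> ('a set \<Rightarrow> dist) \<Rightarrow> bool" where
  "cont_from_below \<Sigma> \<gamma> \<longleftrightarrow> (\<forall>En E. range En \<subseteq> \<Sigma> \<and> E \<in> \<Sigma> \<and> (\<forall>n. En n \<subseteq> En (Suc n))
      \<and> (\<Union>n. En n) = E \<longrightarrow> weak_conv (\<lambda>n. \<gamma> (En n)) (\<gamma> E))"

fun oplus_list :: "(dist \<Rightarrow> dist \<Rightarrow> dist) \<Rightarrow> dist list \<Rightarrow> dist" where
  "oplus_list \<tau> [] = eps 0"
| "oplus_list \<tau> [G] = G"
| "oplus_list \<tau> (G # Gs) = \<tau> G (oplus_list \<tau> Gs)"

text \<open>A simple function sum x_i chi_{E_i} is represented by the list of pairs (x_i, E_i).\<close>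
definition simple_rep :: "'a set set \<Rightarrow> (real \<times> 'a set) list \<Rightarrow> bool" where
  "simple_rep \<Sigma> xs \<longleftrightarrow> (\<forall>(x, A) \<in> set xs. 0 \<le> x \<and> A \<in> \<Sigma>)
     \<and> (\<forall>i<length xs. \<forall>j<length xs. i \<noteq> j \<longrightarrow> snd (xs ! i) \<inter> snd (xs ! j) = {})"

definition simple_val :: "(real \<times> 'a set) list \<Rightarrow> 'a \<Rightarrow> real" where
  "simple_val xs \<omega> = (\<Sum>i<length xs. fst (xs ! i) * indicator (snd (xs ! i)) \<omega>)"

definition simple_integral ::
  "(dist \<Rightarrow> dist \<Rightarrow> dist) \<Rightarrow> ('a set \<Rightarrow> dist) \<Rightarrow> (real \<times> 'a set) list \<Rightarrow> 'a set \<Rightarrow> dist" where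
  "simple_integral \<tau> \<gamma> xs E = oplus_list \<tau> (map (\<lambda>(x, A). smul x (\<gamma> (E \<inter> A))) xs)"

definition measurable_fn :: "'a set \<Rightarrow> 'a set set \<Rightarrow> ('a \<Rightarrow> ennreal) \<Rightarrow> bool" where
  "measurable_fn \<Omega> \<Sigma> f \<longleftrightarrow> (\<exists>s. (\<forall>n. simple_rep \<Sigma> (s n))
      \<and> (\<forall>\<omega>\<in>\<Omega>. (\<lambda>n. ennreal (simple_val (s n) \<omega>)) \<longlonglongrightarrow> f \<omega>))"

definition simple_integrals ::
  "(dist \<Rightarrow> dist \<Rightarrow> dist) \<Rightarrow> 'a set set \<Rightarrow> ('a set \<Rightarrow> dist) \<Rightarrow> ('a \<Rightarrow> ennreal) \<Rightarrow> 'a set \<Rightarrow> dist set" where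
  "simple_integrals \<tau> \<Sigma> \<gamma> f E = {simple_integral \<tau> \<gamma> xs E | xs. simple_rep \<Sigma> xs
      \<and> (\<forall>\<omega>\<in>E. ennreal (simple_val xs \<omega>) \<le> f \<omega>)}"

definition gamma_integrable ::
  "(dist \<Rightarrow> dist \<Rightarrow> dist) \<Rightarrow> 'a set set \<Rightarrow> ('a set \<Rightarrow> dist) \<Rightarrow> ('a \<Rightarrow> ennreal) \<Rightarrow> 'a set \<Rightarrow> bool" where
  "gamma_integrable \<tau> \<Sigma> \<gamma> f E \<longleftrightarrow> (\<exists>H\<in>Delta_plus. \<forall>G\<in>simple_integrals \<tau> \<Sigma> \<gamma> f E. H \<le> G)"

definition Delta_Inf :: "dist set \<Rightarrow> dist" where
  "Delta_Inf S = (THE H. H \<in> Delta_plus \<and> (\<forall>G\<in>S. H \<le> G)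
      \<and> (\<forall>K\<in>Delta_plus. (\<forall>G\<in>S. K \<le> G) \<longrightarrow> K \<le> H))"

definition gamma_integral ::
  "(dist \<Rightarrow> dist \<Rightarrow> dist) \<Rightarrow> 'a set set \<Rightarrow> ('a set \<Rightarrow> dist) \<Rightarrow> ('a \<Rightarrow> ennreal) \<Rightarrow> 'a set \<Rightarrow> dist" where
  "gamma_integral \<tau> \<Sigma> \<gamma> f E = Delta_Inf (simple_integrals \<tau> \<Sigma> \<gamma> f E)"

end

theory Submission
  imports Defs
begin

text \<open>The infimum in Delta-plus of a nonempty set S of distance distribution functions always
  exists: it is the left-continuous regularisation of the pointwise infimum of S. Splitting a
  simple function along disjoint sets E and F gives tau(nu E, nu F) <= nu (E \<union> F) directly.
  For the converse inequality, the simple integrals below f on E form a downward directed set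
  (the pointwise maximum of two simple functions below f is again one, and the simple integral is
  antitone in the integrand), so a sequence of them converges weakly to nu E. Two simple functions
  on E and on F glue to one on E \<union> F, hence nu (E \<union> F) <= tau(a, b) for all simple integrals
  a on E and b on F, and continuity of tau carries this bound to the weak limit.\<close>

section \<open>Distance distribution functions and triangle functions\<close>

lemma Delta_plusD:
  assumes "F \<in> Delta_plus"
  shows "0 \<le> F x" "F x \<le> 1" "mono F" "F PInfty = 1" "x \<le> 0 \<Longrightarrow> F x = 0"
    "((\<lambda>t::real. F (ereal t)) \<longlongrightarrow> F (ereal r)) (at_left r)"
  using assms unfolding Delta_plus_def by auto

lemma Delta_plus_mono: "F \<in> Delta_plus \<Longrightarrow> x \<le> y \<Longrightarrow> F x \<le> F y"
  using Delta_plusD(3) monoD by blast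

lemma Delta_plusI:
  assumes "\<And>x. 0 \<le> F x" "\<And>x. F x \<le> 1" "\<And>x y. x \<le> y \<Longrightarrow> F x \<le> F y" "F PInfty = 1"
    "\<And>x. x \<le> 0 \<Longrightarrow> F x = 0"
    "\<And>r. ((\<lambda>t::real. F (ereal t)) \<longlongrightarrow> F (ereal r)) (at_left r)"
  shows "F \<in> Delta_plus"
  using assms unfolding Delta_plus_def by (auto intro: monoI)

lemma eventually_at_left_less: "eventually (\<lambda>t::real. t < r) (at_left r)"
  by (rule eventually_at_leftI[of "r - 1"]) auto

lemma eps_0_in_Delta_plus: "eps 0 \<in> Delta_plus"
proof (rule Delta_plusI)
  fix r :: real
  have "eventually (\<lambda>t. eps 0 (ereal t) = eps 0 (ereal r)) (at_left r)"
  proof (cases "r \<le> 0")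
    case True
    then show ?thesis
      using eventually_at_left_less[of r] by (auto elim!: eventually_mono simp: eps_def)
  next
    case False
    then show ?thesis
      using eventually_at_left_real[of 0 r] by (auto elim!: eventually_mono simp: eps_def)
  qed
  then show "((\<lambda>t. eps 0 (ereal t)) \<longlongrightarrow> eps 0 (ereal r)) (at_left r)"
    by (rule tendsto_eventually)
qed (auto simp: eps_def zero_ereal_def)

lemma Delta_plus_le_eps_0: "F \<in> Delta_plus \<Longrightarrow> F \<le> eps 0"
  using Delta_plusD[of F] by (auto simp: le_fun_def eps_def not_less zero_ereal_def)

lemma smul_in_Delta_plus:
  assumes "0 \<le> c" "G \<in> Delta_plus"
  shows "smul c G \<in> Delta_plus"
proof (cases "c = 0")
  case True
  then show ?thesis by (simp add: smul_def eps_0_in_Delta_plus)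
next
  case False
  with assms have c: "c > 0" by auto
  note G = Delta_plusD[OF assms(2)]
  show ?thesis
  proof (rule Delta_plusI)
    fix x :: ereal and y :: ereal assume "x \<le> y"
    with c show "smul c G x \<le> smul c G y"
      by (cases x; cases y) (auto simp: smul_def intro!: Delta_plus_mono[OF assms(2)] divide_right_mono)
  next
    fix x :: ereal assume "x \<le> 0"
    with c G(5) show "smul c G x = 0" by (cases x) (auto simp: smul_def divide_nonpos_pos)
  next
    fix r :: real
    have "((\<lambda>t. t / c) \<longlongrightarrow> r / c) (at_left r)"
      using c by (intro tendsto_intros) auto
    moreover have "eventually (\<lambda>t. t / c \<in> {..<r / c} \<and> t / c \<noteq> r / c) (at_left r)"
      using eventually_at_left_less[of r] c by (auto elim!: eventually_mono simp: divide_strict_right_mono)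
    ultimately have "filterlim (\<lambda>t. t / c) (at_left (r / c)) (at_left r)"
      by (simp add: filterlim_at)
    from filterlim_compose[OF G(6)[of "r / c"] this]
    show "((\<lambda>t. smul c G (ereal t)) \<longlongrightarrow> smul c G (ereal r)) (at_left r)"
      using c by (simp add: smul_def)
  qed (use c G in \<open>auto simp: smul_def\<close>)
qed

lemma smul_eps_0:
  assumes "0 \<le> c"
  shows "smul c (eps 0) = eps 0"
proof
  fix x :: ereal
  show "smul c (eps 0) x = eps 0 x"
    using assms by (cases x) (auto simp: smul_def eps_def zero_ereal_def zero_less_divide_iff)
qed

lemma smul_antimono:
  assumes "0 \<le> c" "c \<le> c'" "G \<in> Delta_plus"
  shows "smul c' G \<le> smul c G"
proof (cases "c = 0")
  case True
  then show ?thesis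
    using Delta_plus_le_eps_0[OF smul_in_Delta_plus[OF _ assms(3)], of c'] assms
    by (simp add: smul_def)
next
  case False
  with assms have c: "c > 0" "c' > 0" by auto
  show ?thesis unfolding le_fun_def
  proof
    fix x :: ereal
    show "smul c' G x \<le> smul c G x"
    proof (cases x)
      case (real r)
      show ?thesis
      proof (cases "r \<ge> 0")
        case True
        then have "r / c' \<le> r / c" using c assms by (simp add: divide_left_mono)
        then show ?thesis using real c by (simp add: smul_def Delta_plus_mono[OF assms(3)])
      next
        case False
        then have "r / c' \<le> 0" "r / c \<le> 0" using c by (auto simp: divide_nonpos_pos)
        then show ?thesis using real c Delta_plusD(5)[OF assms(3)] by (simp add: smul_def)
      qed
    qed (use c in \<open>auto simp: smul_def\<close>)
  qed
qed

lemma triangle_functionD: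
  assumes "triangle_function \<tau>"
  shows "G \<in> Delta_plus \<Longrightarrow> H \<in> Delta_plus \<Longrightarrow> \<tau> G H \<in> Delta_plus"
    "G \<in> Delta_plus \<Longrightarrow> H \<in> Delta_plus \<Longrightarrow> \<tau> G H = \<tau> H G"
    "G \<in> Delta_plus \<Longrightarrow> H \<in> Delta_plus \<Longrightarrow> K \<in> Delta_plus \<Longrightarrow> \<tau> G (\<tau> H K) = \<tau> (\<tau> G H) K"
    "G \<in> Delta_plus \<Longrightarrow> G' \<in> Delta_plus \<Longrightarrow> H \<in> Delta_plus \<Longrightarrow> G \<le> G' \<Longrightarrow> \<tau> G H \<le> \<tau> G' H"
    "G \<in> Delta_plus \<Longrightarrow> \<tau> G (eps 0) = G"
  using assms unfolding triangle_function_def by blast+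

lemma triangle_function_mono:
  assumes "triangle_function \<tau>" "G \<in> Delta_plus" "G' \<in> Delta_plus" "H \<in> Delta_plus" "H' \<in> Delta_plus"
    "G \<le> G'" "H \<le> H'"
  shows "\<tau> G H \<le> \<tau> G' H'"
proof -
  note T = triangle_functionD[OF assms(1)]
  have "\<tau> G H \<le> \<tau> G' H" using assms T(4) by blast
  also have "\<dots> = \<tau> H G'" using assms T(2) by blast
  also have "\<dots> \<le> \<tau> H' G'" using assms T(4) by blast
  also have "\<dots> = \<tau> G' H'" using assms T(2) by blast
  finally show ?thesis .
qed

lemma triangle_function_interchange:
  assumes "triangle_function \<tau>" "a \<in> Delta_plus" "b \<in> Delta_plus" "A \<in> Delta_plus" "B \<in> Delta_plus"
  shows "\<tau> (\<tau> a b) (\<tau> A B) = \<tau> (\<tau> a A) (\<tau> b B)"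
proof -
  note T = triangle_functionD[OF assms(1)]
  have "\<tau> (\<tau> a b) (\<tau> A B) = \<tau> a (\<tau> b (\<tau> A B))" by (rule sym, rule T(3)) (intro assms T(1))+
  also have "\<tau> b (\<tau> A B) = \<tau> (\<tau> b A) B" by (rule T(3)) (intro assms)+
  also have "\<tau> b A = \<tau> A b" by (rule T(2)) (intro assms)+
  also have "\<tau> (\<tau> A b) B = \<tau> A (\<tau> b B)" by (rule sym, rule T(3)) (intro assms)+
  also have "\<tau> a (\<tau> A (\<tau> b B)) = \<tau> (\<tau> a A) (\<tau> b B)" by (rule T(3)) (intro assms T(1))+
  finally show ?thesis .
qed

section \<open>Infima in Delta-plus and their weak approximation\<close>

definition pointwise_Inf :: "dist set \<Rightarrow> ereal \<Rightarrow> real" where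
  "pointwise_Inf S x = Inf ((\<lambda>G. G x) ` S)"

text \<open>The pointwise infimum need not be left-continuous; its left-continuous regularisation
  is the infimum in Delta-plus.\<close>
definition left_Inf :: "dist set \<Rightarrow> dist" where
  "left_Inf S x = (case x of
       ereal r \<Rightarrow> (SUP t\<in>{..<r}. pointwise_Inf S (ereal t)) | PInfty \<Rightarrow> 1 | MInfty \<Rightarrow> 0)"

definition down_directed :: "dist set \<Rightarrow> bool" where
  "down_directed S \<longleftrightarrow> (\<forall>a\<in>S. \<forall>b\<in>S. \<exists>c\<in>S. c \<le> a \<and> c \<le> b)"

context
  fixes S assumes S: "S \<subseteq> Delta_plus" "S \<noteq> {}"
begin

lemma bdd_below_values: "bdd_below ((\<lambda>G. G x) ` S)"
  using S Delta_plusD(1) by (auto intro!: bdd_belowI[of _ 0])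

lemma pointwise_Inf_le: "G \<in> S \<Longrightarrow> pointwise_Inf S x \<le> G x"
  unfolding pointwise_Inf_def by (rule cInf_lower) (use bdd_below_values in auto)

lemma pointwise_Inf_greatest: "(\<And>G. G \<in> S \<Longrightarrow> a \<le> G x) \<Longrightarrow> a \<le> pointwise_Inf S x"
  unfolding pointwise_Inf_def by (rule cInf_greatest) (use S in auto)

lemma pointwise_Inf_less_iff: "pointwise_Inf S x < a \<longleftrightarrow> (\<exists>G\<in>S. G x < a)"
  unfolding pointwise_Inf_def by (subst cInf_less_iff) (use S bdd_below_values in auto)

lemma pointwise_Inf_nonneg: "0 \<le> pointwise_Inf S x"
  using S Delta_plusD(1) by (auto intro!: pointwise_Inf_greatest)

lemma pointwise_Inf_le_1: "pointwise_Inf S x \<le> 1"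
  using S pointwise_Inf_le Delta_plusD(2) by (meson all_not_in_conv order_trans subsetD)

lemma pointwise_Inf_mono: "x \<le> y \<Longrightarrow> pointwise_Inf S x \<le> pointwise_Inf S y"
  by (rule pointwise_Inf_greatest) (meson Delta_plus_mono S(1) pointwise_Inf_le order_trans subsetD)

lemma bdd_above_pointwise_Inf: "bdd_above ((\<lambda>t. pointwise_Inf S (ereal t)) ` A)"
  using pointwise_Inf_le_1 by (auto intro!: bdd_aboveI[of _ 1])

lemma left_Inf_PInf [simp]: "left_Inf S \<infinity> = 1"
  and left_Inf_MInf [simp]: "left_Inf S (- \<infinity>) = 0"
  by (simp_all add: left_Inf_def)

lemma left_Inf_ereal: "left_Inf S (ereal r) = (SUP t\<in>{..<r}. pointwise_Inf S (ereal t))"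
  by (simp add: left_Inf_def)

lemma pointwise_Inf_le_left_Inf: "t < r \<Longrightarrow> pointwise_Inf S (ereal t) \<le> left_Inf S (ereal r)"
  unfolding left_Inf_ereal by (rule cSUP_upper) (use bdd_above_pointwise_Inf in auto)

lemma left_Inf_le_pointwise_Inf: "left_Inf S x \<le> pointwise_Inf S x"
proof (cases x)
  case PInf
  then show ?thesis
    by (auto simp: left_Inf_def intro!: pointwise_Inf_greatest dest!: subsetD[OF S(1)] Delta_plusD(4))
qed (auto simp: left_Inf_def pointwise_Inf_nonneg intro!: cSUP_least pointwise_Inf_mono)

lemma left_Inf_nonneg: "0 \<le> left_Inf S x"
proof (cases x)
  case (real r)
  then show ?thesis
    using pointwise_Inf_le_left_Inf[of "r - 1" r] pointwise_Inf_nonneg[of "ereal (r - 1)"] by simp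
qed (auto simp: left_Inf_def)

lemma left_Inf_le_1: "left_Inf S x \<le> 1"
  by (cases x) (auto simp: left_Inf_def intro!: cSUP_least pointwise_Inf_le_1)

lemma left_Inf_mono_ereal: "r \<le> r' \<Longrightarrow> left_Inf S (ereal r) \<le> left_Inf S (ereal r')"
  unfolding left_Inf_ereal[of r] by (rule cSUP_least) (auto intro: pointwise_Inf_le_left_Inf)

lemma left_Inf_left_continuous:
  "((\<lambda>t. left_Inf S (ereal t)) \<longlongrightarrow> left_Inf S (ereal r)) (at_left r)"
proof (rule order_tendstoI)
  fix a assume "a < left_Inf S (ereal r)"
  then obtain t0 where t0: "t0 < r" "a < pointwise_Inf S (ereal t0)"
    unfolding left_Inf_ereal by (subst (asm) less_cSUP_iff) (use bdd_above_pointwise_Inf in auto)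
  have "eventually (\<lambda>t. t \<in> {t0<..<r}) (at_left r)"
    by (rule eventually_at_left_real) fact
  then show "eventually (\<lambda>t. a < left_Inf S (ereal t)) (at_left r)"
    by eventually_elim (use t0 pointwise_Inf_le_left_Inf in \<open>auto intro: order_less_le_trans\<close>)
next
  fix a assume a: "left_Inf S (ereal r) < a"
  show "eventually (\<lambda>t. left_Inf S (ereal t) < a) (at_left r)"
    using eventually_at_left_less[of r]
    by eventually_elim (meson a left_Inf_mono_ereal less_imp_le order_le_less_trans)
qed

lemma left_Inf_in_Delta_plus: "left_Inf S \<in> Delta_plus"
proof (rule Delta_plusI)
  fix x y :: ereal assume "x \<le> y"
  then show "left_Inf S x \<le> left_Inf S y"
    by (cases x; cases y)
      (auto simp: left_Inf_nonneg left_Inf_le_1 intro: left_Inf_mono_ereal)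
next
  fix x :: ereal assume "x \<le> 0"
  moreover obtain G where "G \<in> S" using S by auto
  ultimately show "left_Inf S x = 0"
    using S left_Inf_le_pointwise_Inf[of x] pointwise_Inf_le[of G x] Delta_plusD(5)[of G x]
      left_Inf_nonneg[of x] by auto
qed (auto simp: left_Inf_nonneg left_Inf_le_1 left_Inf_left_continuous)

lemma left_Inf_le: "G \<in> S \<Longrightarrow> left_Inf S \<le> G"
  using left_Inf_le_pointwise_Inf pointwise_Inf_le by (auto simp: le_fun_def intro: order_trans)

lemma left_Inf_greatest:
  assumes K: "K \<in> Delta_plus" and lower: "\<And>G. G \<in> S \<Longrightarrow> K \<le> G"
  shows "K \<le> left_Inf S"
  unfolding le_fun_def
proof
  fix x show "K x \<le> left_Inf S x"
  proof (cases x)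
    case (real r)
    have "eventually (\<lambda>t. K (ereal t) \<le> left_Inf S (ereal r)) (at_left r)"
      using eventually_at_left_less[of r]
    proof eventually_elim
      fix t assume "t < r"
      have "K (ereal t) \<le> pointwise_Inf S (ereal t)"
        using lower by (auto intro!: pointwise_Inf_greatest simp: le_fun_def)
      also have "\<dots> \<le> left_Inf S (ereal r)" using \<open>t < r\<close> by (rule pointwise_Inf_le_left_Inf)
      finally show "K (ereal t) \<le> left_Inf S (ereal r)" .
    qed
    with real show ?thesis
      using tendsto_le[OF trivial_limit_at_left_real tendsto_const Delta_plusD(6)[OF K]] by simp
  qed (use Delta_plusD[OF K] in auto)
qed

lemma Delta_Inf_eq_left_Inf: "Delta_Inf S = left_Inf S"
  unfolding Delta_Inf_def
  by (rule the_equality) (use left_Inf_in_Delta_plus left_Inf_le left_Inf_greatest in \<open>auto intro: antisym\<close>)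

lemma down_directed_approx_finite:
  assumes "down_directed S" "finite P" "e > 0"
  shows "\<exists>c\<in>S. \<forall>p\<in>P. c p \<le> pointwise_Inf S p + e"
  using \<open>finite P\<close>
proof (induction P rule: finite_induct)
  case empty
  then show ?case using S by auto
next
  case (insert p P)
  then obtain c where c: "c \<in> S" "\<forall>q\<in>P. c q \<le> pointwise_Inf S q + e" by auto
  obtain a where a: "a \<in> S" "a p < pointwise_Inf S p + e"
    using pointwise_Inf_less_iff[of p "pointwise_Inf S p + e"] \<open>e > 0\<close> by auto
  obtain d where "d \<in> S" "d \<le> c" "d \<le> a"
    using \<open>down_directed S\<close> a c unfolding down_directed_def by blast
  have "d r \<le> pointwise_Inf S r + e" if "r \<in> insert p P" for r
  proof -
    have "d r \<le> a r" "d r \<le> c r" using \<open>d \<le> a\<close> \<open>d \<le> c\<close> by (simp_all add: le_fun_def)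
    with that a(2) c(2) show ?thesis by auto
  qed
  with \<open>d \<in> S\<close> show ?case by blast
qed

lemma weak_conv_left_Inf:
  assumes s: "range s \<subseteq> S"
    and approx: "\<And>q e. q \<in> \<rat> \<Longrightarrow> e > 0 \<Longrightarrow>
      eventually (\<lambda>n. s n (ereal q) \<le> pointwise_Inf S (ereal q) + e) sequentially"
  shows "weak_conv s (left_Inf S)"
  unfolding weak_conv_def
proof (intro allI impI order_tendstoI)
  fix x :: real and a
  assume "a < left_Inf S (ereal x)"
  moreover have "left_Inf S (ereal x) \<le> s n (ereal x)" for n
    using s left_Inf_le[of "s n"] by (simp add: le_fun_def subset_iff)
  ultimately show "eventually (\<lambda>n. a < s n (ereal x)) sequentially"
    by (simp add: order_less_le_trans)
next
  fix x :: real and a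
  assume cont: "isCont (\<lambda>t. left_Inf S (ereal t)) x" and a: "left_Inf S (ereal x) < a"
  define m where "m = (left_Inf S (ereal x) + a) / 2"
  have "((\<lambda>t. left_Inf S (ereal t)) \<longlongrightarrow> left_Inf S (ereal x)) (at_right x)"
    using cont by (simp add: isCont_def filterlim_at_split)
  moreover have "left_Inf S (ereal x) < m" using a by (simp add: m_def)
  ultimately have "eventually (\<lambda>t. left_Inf S (ereal t) < m) (at_right x)"
    by (rule order_tendstoD(2))
  then obtain b where "x < b" and b: "\<And>y. x < y \<Longrightarrow> y < b \<Longrightarrow> left_Inf S (ereal y) < m"
    unfolding eventually_at_right_field by blast
  then obtain q where q: "q \<in> \<rat>" "x < q" "q < b" using Rats_dense_in_real by blast
  have "pointwise_Inf S (ereal q) \<le> left_Inf S (ereal ((q + b) / 2))"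
    using q by (intro pointwise_Inf_le_left_Inf) simp
  also have "\<dots> < m" using q by (intro b) auto
  finally have q_below: "pointwise_Inf S (ereal q) < m" .
  have "m < a" using a by (simp add: m_def)
  with approx[OF q(1), of "a - m"]
  have "eventually (\<lambda>n. s n (ereal q) \<le> pointwise_Inf S (ereal q) + (a - m)) sequentially"
    by simp
  then show "eventually (\<lambda>n. s n (ereal x) < a) sequentially"
  proof eventually_elim
    fix n assume "s n (ereal q) \<le> pointwise_Inf S (ereal q) + (a - m)"
    moreover have "s n (ereal x) \<le> s n (ereal q)"
      using s q(2) S(1) by (intro Delta_plus_mono) auto
    ultimately show "s n (ereal x) < a" using q_below by linarith
  qed
qed

lemma down_directed_weak_conv_seq:
  assumes "down_directed S"
  obtains s where "range s \<subseteq> S" "weak_conv s (left_Inf S)"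
proof -
  define Q where "Q n = ereal ` from_nat_into \<rat> ` {..n}" for n
  have "\<exists>c\<in>S. \<forall>p\<in>Q n. c p \<le> pointwise_Inf S p + 1 / Suc n" for n
    by (rule down_directed_approx_finite[OF assms]) (simp_all add: Q_def)
  then obtain s where s: "\<And>n. s n \<in> S"
    and s_approx: "\<And>n p. p \<in> Q n \<Longrightarrow> s n p \<le> pointwise_Inf S p + 1 / Suc n"
    by metis
  have "weak_conv s (left_Inf S)"
  proof (rule weak_conv_left_Inf)
    fix q :: real and e :: real assume "q \<in> \<rat>" "e > 0"
    obtain k where k: "from_nat_into \<rat> k = q"
      using from_nat_into_surj[OF countable_rat \<open>q \<in> \<rat>\<close>] by blast
    obtain N where N: "inverse (real (Suc N)) < e" using reals_Archimedean \<open>e > 0\<close> by blast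
    show "eventually (\<lambda>n. s n (ereal q) \<le> pointwise_Inf S (ereal q) + e) sequentially"
      unfolding eventually_sequentially
    proof (intro exI allI impI)
      fix n assume n: "max k N \<le> n"
      then have "ereal q \<in> Q n" using k by (auto simp: Q_def)
      moreover have "1 / real (Suc n) \<le> inverse (real (Suc N))"
        using n by (simp add: divide_inverse le_imp_inverse_le)
      ultimately show "s n (ereal q) \<le> pointwise_Inf S (ereal q) + e"
        using s_approx[of "ereal q" n] N by linarith
    qed
  qed (use s in blast)
  with s that show thesis by blast
qed

end

lemma mono_isCont_between:
  fixes T :: "real \<Rightarrow> real"
  assumes "mono T" "a < b"
  obtains t where "a < t" "t < b" "isCont T t"
proof -
  have "\<not> countable {a<..<b}" using uncountable_open_interval assms(2) by blast
  then have "\<not> {a<..<b} \<subseteq> {t. \<not> isCont T t}"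
    using countable_subset mono_ctble_discont[OF assms(1)] by blast
  with that show thesis by auto
qed

text \<open>Weak limits need not converge at discontinuity points; these are countable, so one
  compares at a nearby continuity point and uses left-continuity of the lower bound.\<close>
lemma weak_conv_lower_bound:
  assumes K: "K \<in> Delta_plus" and T: "T \<in> Delta_plus"
    and conv: "weak_conv s T" and lower: "\<And>n. K \<le> s n"
  shows "K \<le> T"
  unfolding le_fun_def
proof
  fix x show "K x \<le> T x"
  proof (cases x)
    case (real r)
    have "K (ereal r) \<le> T (ereal r) + e" if "e > 0" for e
    proof -
      have "eventually (\<lambda>t. K (ereal r) - e < K (ereal t)) (at_left r)"
        using order_tendstoD(1)[OF Delta_plusD(6)[OF K, of r], of "K (ereal r) - e"] that by simp
      then obtain b where "b < r" and b: "\<And>y. b < y \<Longrightarrow> y < r \<Longrightarrow> K (ereal r) - e < K (ereal y)"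
        unfolding eventually_at_left_field by blast
      have "mono (\<lambda>t. T (ereal t))" using Delta_plus_mono[OF T] by (auto intro: monoI)
      then obtain t where t: "b < t" "t < r" "isCont (\<lambda>t. T (ereal t)) t"
        using mono_isCont_between \<open>b < r\<close> by blast
      have "(\<lambda>n. s n (ereal t)) \<longlonglongrightarrow> T (ereal t)" using conv t(3) unfolding weak_conv_def by blast
      then have "K (ereal t) \<le> T (ereal t)"
        by (rule LIMSEQ_le_const) (use lower in \<open>simp add: le_fun_def\<close>)
      moreover have "T (ereal t) \<le> T (ereal r)" using t by (intro Delta_plus_mono[OF T]) auto
      ultimately show ?thesis using b[OF t(1,2)] by linarith
    qed
    then show ?thesis using real field_le_epsilon by blast
  next
    case PInf
    then show ?thesis using Delta_plusD(2,4)[OF K] Delta_plusD(4)[OF T] by simp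
  next
    case MInf
    then show ?thesis using Delta_plusD(5)[OF K, of x] Delta_plusD(1)[OF T, of x] by simp
  qed
qed

text \<open>This is where continuity of the triangle function enters.\<close>
lemma left_Inf_tau_greatest:
  assumes tf: "triangle_function \<tau>" and ct: "continuous_tf \<tau>"
    and A: "A \<subseteq> Delta_plus" "A \<noteq> {}" "down_directed A"
    and B: "B \<subseteq> Delta_plus" "B \<noteq> {}" "down_directed B"
    and K: "K \<in> Delta_plus" and lower: "\<And>a b. a \<in> A \<Longrightarrow> b \<in> B \<Longrightarrow> K \<le> \<tau> a b"
  shows "K \<le> \<tau> (left_Inf A) (left_Inf B)"
proof -
  obtain sa where sa: "range sa \<subseteq> A" "weak_conv sa (left_Inf A)"
    using down_directed_weak_conv_seq[OF A] by blast
  obtain sb where sb: "range sb \<subseteq> B" "weak_conv sb (left_Inf B)"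
    using down_directed_weak_conv_seq[OF B] by blast
  have "range sa \<subseteq> Delta_plus" "range sb \<subseteq> Delta_plus" using sa(1) sb(1) A(1) B(1) by auto
  with sa(2) sb(2) left_Inf_in_Delta_plus[OF A(1,2)] left_Inf_in_Delta_plus[OF B(1,2)]
  have "weak_conv (\<lambda>n. \<tau> (sa n) (sb n)) (\<tau> (left_Inf A) (left_Inf B))"
    using ct unfolding continuous_tf_def by blast
  moreover have "K \<le> \<tau> (sa n) (sb n)" for n using sa(1) sb(1) lower by (simp add: subset_iff)
  ultimately show ?thesis
    using weak_conv_lower_bound[OF K] triangle_functionD(1)[OF tf]
      left_Inf_in_Delta_plus[OF A(1,2)] left_Inf_in_Delta_plus[OF B(1,2)] by blast
qed

section \<open>Simple functions\<close>

lemma simple_rep_Nil [simp]: "simple_rep \<Sigma> []"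
  by (simp add: simple_rep_def)

lemma simple_rep_Cons:
  "simple_rep \<Sigma> ((x, A) # xs) \<longleftrightarrow>
     0 \<le> x \<and> A \<in> \<Sigma> \<and> simple_rep \<Sigma> xs \<and> (\<forall>p\<in>set xs. A \<inter> snd p = {})"
  unfolding simple_rep_def
  by (simp add: All_less_Suc2 all_set_conv_all_nth Int_commute[of "snd _" A] imp_conjR all_conj_distrib)
    (simp add: conj_ac)

lemma simple_rep_ConsE:
  assumes "simple_rep \<Sigma> (p # xs)"
  obtains x A where "p = (x, A)" "0 \<le> x" "A \<in> \<Sigma>" "simple_rep \<Sigma> xs" "\<forall>q\<in>set xs. A \<inter> snd q = {}"
  using assms by (cases p) (auto simp: simple_rep_Cons)

lemma simple_rep_append:
  assumes "simple_rep \<Sigma> xs" "simple_rep \<Sigma> ys" "\<forall>p\<in>set xs. \<forall>q\<in>set ys. snd p \<inter> snd q = {}"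
  shows "simple_rep \<Sigma> (xs @ ys)"
  using assms
proof (induction xs)
  case (Cons p xs)
  from Cons.prems(1) obtain x A where p: "p = (x, A)" "0 \<le> x" "A \<in> \<Sigma>" "simple_rep \<Sigma> xs"
    and disj: "\<forall>q\<in>set xs. A \<inter> snd q = {}" by (rule simple_rep_ConsE)
  have "simple_rep \<Sigma> (xs @ ys)" using Cons.IH p(4) Cons.prems(2,3) by simp
  moreover have "\<forall>q\<in>set (xs @ ys). A \<inter> snd q = {}" using disj Cons.prems(3) p(1) by auto
  ultimately show ?case using p by (simp add: simple_rep_Cons)
qed simp

lemma simple_rep_map:
  assumes "simple_rep \<Sigma> xs" "\<And>x A. (x, A) \<in> set xs \<Longrightarrow> 0 \<le> h x \<and> g A \<in> \<Sigma> \<and> g A \<subseteq> A"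
  shows "simple_rep \<Sigma> (map (\<lambda>(x, A). (h x, g A)) xs)"
  using assms
proof (induction xs)
  case (Cons p xs)
  from Cons.prems(1) obtain x A where p: "p = (x, A)" "simple_rep \<Sigma> xs"
    and disj: "\<forall>q\<in>set xs. A \<inter> snd q = {}" by (rule simple_rep_ConsE)
  have "simple_rep \<Sigma> (map (\<lambda>(x, A). (h x, g A)) xs)"
    using p(2) Cons.prems(2) by (intro Cons.IH) auto
  moreover have "\<forall>q\<in>set (map (\<lambda>(x, A). (h x, g A)) xs). g A \<inter> snd q = {}"
  proof
    fix q assume "q \<in> set (map (\<lambda>(x, A). (h x, g A)) xs)"
    then obtain y B where yB: "(y, B) \<in> set xs" "q = (h y, g B)" by auto
    have "g B \<subseteq> B" "g A \<subseteq> A" using Cons.prems(2) yB(1) p(1) by auto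
    then show "g A \<inter> snd q = {}" using disj yB by fastforce
  qed
  moreover have "0 \<le> h x" "g A \<in> \<Sigma>" using Cons.prems(2)[of x A] p(1) by auto
  ultimately show ?case by (simp add: p(1) simple_rep_Cons)
qed simp

lemma simple_val_Nil [simp]: "simple_val [] w = 0"
  by (simp add: simple_val_def)

lemma simple_val_Cons: "simple_val ((x, A) # xs) w = x * indicator A w + simple_val xs w"
  unfolding simple_val_def by (simp add: sum.lessThan_Suc_shift del: sum.lessThan_Suc)

lemma simple_val_append: "simple_val (xs @ ys) w = simple_val xs w + simple_val ys w"
  by (induction xs) (auto simp: simple_val_Cons)

lemma simple_val_restrict:
  "simple_val (map (\<lambda>(x, A). (x, A \<inter> E)) xs) w = (if w \<in> E then simple_val xs w else 0)"
  by (induction xs) (auto simp: simple_val_Cons indicator_def)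

lemma simple_val_outside: "w \<notin> \<Union>(snd ` set xs) \<Longrightarrow> simple_val xs w = 0"
  by (induction xs) (auto simp: simple_val_Cons)

lemma simple_val_nonneg: "simple_rep \<Sigma> xs \<Longrightarrow> 0 \<le> simple_val xs w"
  by (induction xs) (auto simp: simple_val_Cons simple_rep_Cons)

lemma simple_val_eq:
  "simple_rep \<Sigma> xs \<Longrightarrow> (x, A) \<in> set xs \<Longrightarrow> w \<in> A \<Longrightarrow> simple_val xs w = x"
proof (induction xs)
  case (Cons p xs)
  from Cons.prems(1) obtain y B where p: "p = (y, B)" "simple_rep \<Sigma> xs"
    and disj: "\<forall>q\<in>set xs. B \<inter> snd q = {}" by (rule simple_rep_ConsE)
  show ?case
  proof (cases "(x, A) = p")
    case True
    with p(1) have "B = A" by simp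
    with Cons.prems(3) disj have "w \<notin> \<Union>(snd ` set xs)" by auto
    with True p show ?thesis using Cons.prems by (simp add: simple_val_Cons simple_val_outside)
  next
    case False
    with Cons.prems(2) p(1) have xA: "(x, A) \<in> set xs" by auto
    with disj Cons.prems(3) have "w \<notin> B" by fastforce
    with Cons.IH Cons.prems(3) xA p show ?thesis by (simp add: simple_val_Cons)
  qed
qed simp

text \<open>Pointwise maximum of two simple functions: inserting a piece (y, B) splits every piece of xs
  along B, raises the values on B to at least y, and adds the part of B not yet covered by xs.\<close>
definition simple_max_insert :: "(real \<times> 'a set) list \<Rightarrow> real \<times> 'a set \<Rightarrow> (real \<times> 'a set) list" where
  "simple_max_insert xs p = map (\<lambda>(x, A). (max x (fst p), A \<inter> snd p)) xs
     @ map (\<lambda>(x, A). (x, A - snd p)) xs @ [(fst p, snd p - \<Union>(snd ` set xs))]"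

fun simple_max :: "(real \<times> 'a set) list \<Rightarrow> (real \<times> 'a set) list \<Rightarrow> (real \<times> 'a set) list" where
  "simple_max xs [] = xs"
| "simple_max xs (p # ys) = simple_max (simple_max_insert xs p) ys"

locale tau_measure = ring_of_sets \<Omega> \<Sigma>
  for \<Omega> :: "'a set" and \<Sigma> :: "'a set set" +
  fixes \<tau> :: "dist \<Rightarrow> dist \<Rightarrow> dist" and \<gamma> :: "'a set \<Rightarrow> dist"
  assumes triangle: "triangle_function \<tau>" and distributive: "distributive_tf \<tau>"
    and decomposable: "decomposable_measure \<tau> \<Sigma> \<gamma>"
begin

lemma simple_rep_Union_in: "simple_rep \<Sigma> xs \<Longrightarrow> \<Union>(snd ` set xs) \<in> \<Sigma>"
proof (induction xs)
  case (Cons p xs)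
  from Cons.prems obtain x A where "p = (x, A)" "A \<in> \<Sigma>" "simple_rep \<Sigma> xs"
    by (rule simple_rep_ConsE)
  with Cons.IH show ?case by (simp add: local.Un)
qed simp

lemma simple_rep_simple_max_insert:
  assumes xs: "simple_rep \<Sigma> xs" and "0 \<le> y" "B \<in> \<Sigma>"
  shows "simple_rep \<Sigma> (simple_max_insert xs (y, B))"
proof -
  define U where "U = \<Union>(snd ` set xs)"
  have U: "U \<in> \<Sigma>" using simple_rep_Union_in[OF xs] by (simp add: U_def)
  have pieces: "\<And>x A. (x, A) \<in> set xs \<Longrightarrow> 0 \<le> x \<and> A \<in> \<Sigma>"
    using xs unfolding simple_rep_def by blast
  have inside: "simple_rep \<Sigma> (map (\<lambda>(x, A). (max x y, A \<inter> B)) xs)"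
    using simple_rep_map[OF xs, where h="\<lambda>x. max x y" and g="\<lambda>A. A \<inter> B"] pieces assms
    by fastforce
  have outside: "simple_rep \<Sigma> (map (\<lambda>(x, A). (x, A - B)) xs)"
    using simple_rep_map[OF xs, where h="\<lambda>x. x" and g="\<lambda>A. A - B"] pieces assms by fastforce
  have new: "simple_rep \<Sigma> [(y, B - U)]" using assms U by (simp add: simple_rep_Cons Diff)
  have "simple_rep \<Sigma> (map (\<lambda>(x, A). (x, A - B)) xs @ [(y, B - U)])"
    by (rule simple_rep_append[OF outside new]) (auto simp: U_def)
  then have "simple_rep \<Sigma> (map (\<lambda>(x, A). (max x y, A \<inter> B)) xs
      @ map (\<lambda>(x, A). (x, A - B)) xs @ [(y, B - U)])"
    by (rule simple_rep_append[OF inside]) (auto simp: U_def)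
  then show ?thesis by (simp add: simple_max_insert_def U_def)
qed

lemma simple_val_simple_max_insert:
  assumes xs: "simple_rep \<Sigma> xs" and y: "0 \<le> y" and B: "B \<in> \<Sigma>"
  shows "simple_val (simple_max_insert xs (y, B)) w =
    (if w \<in> B then max (simple_val xs w) y else simple_val xs w)"
proof -
  note ins = simple_rep_simple_max_insert[OF assms]
  show ?thesis
  proof (cases "\<exists>x A. (x, A) \<in> set xs \<and> w \<in> A")
    case True
    then obtain x A where xA: "(x, A) \<in> set xs" "w \<in> A" by blast
    have val: "simple_val xs w = x" by (rule simple_val_eq[OF xs xA])
    show ?thesis
    proof (cases "w \<in> B")
      case True
      have "(max x y, A \<inter> B) \<in> set (simple_max_insert xs (y, B))"
        using xA by (force simp: simple_max_insert_def)
      from simple_val_eq[OF ins this] show ?thesis using True val xA by simp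
    next
      case False
      have "(x, A - B) \<in> set (simple_max_insert xs (y, B))"
        using xA by (force simp: simple_max_insert_def)
      from simple_val_eq[OF ins this] show ?thesis using False val xA by simp
    qed
  next
    case False
    then have w: "w \<notin> \<Union>(snd ` set xs)" by force
    then have val: "simple_val xs w = 0" by (rule simple_val_outside)
    show ?thesis
    proof (cases "w \<in> B")
      case True
      have "(y, B - \<Union>(snd ` set xs)) \<in> set (simple_max_insert xs (y, B))"
        by (simp add: simple_max_insert_def)
      from simple_val_eq[OF ins this] show ?thesis using True val w y by simp
    next
      case False
      then have "w \<notin> \<Union>(snd ` set (simple_max_insert xs (y, B)))"
        using w by (force simp: simple_max_insert_def)
      then show ?thesis using simple_val_outside False val by simp
    qed
  qed
qed

lemma simple_max:
  assumes "simple_rep \<Sigma> xs" "simple_rep \<Sigma> ys"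
  shows "simple_rep \<Sigma> (simple_max xs ys)"
    and "simple_val (simple_max xs ys) w = max (simple_val xs w) (simple_val ys w)"
proof -
  have "simple_rep \<Sigma> (simple_max xs ys) \<and>
      (\<forall>w. simple_val (simple_max xs ys) w = max (simple_val xs w) (simple_val ys w))"
    using assms
  proof (induction ys arbitrary: xs)
    case Nil
    then show ?case using simple_val_nonneg[OF Nil(1)] by (simp add: max_def antisym)
  next
    case (Cons p ys)
    from Cons.prems(2) obtain y B where p: "p = (y, B)" "0 \<le> y" "B \<in> \<Sigma>" "simple_rep \<Sigma> ys"
      and disj: "\<forall>q\<in>set ys. B \<inter> snd q = {}" by (rule simple_rep_ConsE)
    note IH = Cons.IH[OF simple_rep_simple_max_insert[OF Cons.prems(1) p(2,3)] p(4)]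
    note ins_val = simple_val_simple_max_insert[OF Cons.prems(1) p(2,3)]
    have "simple_val (simple_max xs (p # ys)) w = max (simple_val xs w) (simple_val (p # ys) w)" for w
    proof (cases "w \<in> B")
      case True
      with disj have "simple_val ys w = 0" by (intro simple_val_outside) blast
      moreover have "simple_val (p # ys) w = y"
        using simple_val_eq[OF Cons.prems(2), of y B w] True p(1) by simp
      ultimately show ?thesis using IH ins_val[of w] True p simple_val_nonneg[OF Cons.prems(1), of w]
        by (simp add: max_def)
    next
      case False
      then show ?thesis using IH ins_val[of w] p(1) by (simp add: simple_val_Cons)
    qed
    then show ?case using IH p(1) by simp
  qed
  then show "simple_rep \<Sigma> (simple_max xs ys)"
    and "simple_val (simple_max xs ys) w = max (simple_val xs w) (simple_val ys w)" by blast+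
qed

lemma simple_rep_glue:
  assumes xs: "simple_rep \<Sigma> xs" and ys: "simple_rep \<Sigma> ys"
    and E: "E \<in> \<Sigma>" and F: "F \<in> \<Sigma>" and disj: "E \<inter> F = {}"
  obtains zs where "simple_rep \<Sigma> zs"
    "\<And>w. w \<in> E \<Longrightarrow> simple_val zs w = simple_val xs w"
    "\<And>w. w \<in> F \<Longrightarrow> simple_val zs w = simple_val ys w"
proof
  let ?zs = "map (\<lambda>(x, A). (x, A \<inter> E)) xs @ map (\<lambda>(x, A). (x, A \<inter> F)) ys"
  have "simple_rep \<Sigma> (map (\<lambda>(x, A). (x, A \<inter> C)) zs)" if "simple_rep \<Sigma> zs" "C \<in> \<Sigma>" for zs C
    using simple_rep_map[OF that(1), where h="\<lambda>x. x" and g="\<lambda>A. A \<inter> C"] that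
    unfolding simple_rep_def by fastforce
  with xs ys E F disj show "simple_rep \<Sigma> ?zs" by (intro simple_rep_append) auto
  show "simple_val ?zs w = simple_val xs w" if "w \<in> E" for w
    using that disj by (auto simp: simple_val_append simple_val_restrict)
  show "simple_val ?zs w = simple_val ys w" if "w \<in> F" for w
    using that disj by (auto simp: simple_val_append simple_val_restrict)
qed

section \<open>Simple integrals and the integral with respect to a decomposable measure\<close>

lemma gamma_in_Delta_plus: "E \<in> \<Sigma> \<Longrightarrow> \<gamma> E \<in> Delta_plus"
  and gamma_empty: "\<gamma> {} = eps 0"
  and gamma_Un: "E \<in> \<Sigma> \<Longrightarrow> F \<in> \<Sigma> \<Longrightarrow> E \<inter> F = {} \<Longrightarrow> \<gamma> (E \<union> F) = \<tau> (\<gamma> E) (\<gamma> F)"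
  using decomposable unfolding decomposable_measure_def by blast+

lemma gamma_split: "E \<in> \<Sigma> \<Longrightarrow> C \<in> \<Sigma> \<Longrightarrow> \<gamma> E = \<tau> (\<gamma> (E \<inter> C)) (\<gamma> (E - C))"
  using gamma_Un[of "E \<inter> C" "E - C"] by (simp add: Int Diff Int_Diff_Un Int_Diff_disjoint)

lemma smul_tau: "0 \<le> c \<Longrightarrow> G \<in> Delta_plus \<Longrightarrow> H \<in> Delta_plus \<Longrightarrow>
    smul c (\<tau> G H) = \<tau> (smul c G) (smul c H)"
  using distributive unfolding distributive_tf_def by blast

lemmas tau_in_Delta_plus = triangle_functionD(1)[OF triangle]
  and tau_eps_0 = triangle_functionD(5)[OF triangle]

lemma eps_0_tau: "G \<in> Delta_plus \<Longrightarrow> \<tau> (eps 0) G = G"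
  using triangle_functionD(2)[OF triangle eps_0_in_Delta_plus] tau_eps_0 by metis

lemma simple_integral_Nil [simp]: "simple_integral \<tau> \<gamma> [] E = eps 0"
  by (simp add: simple_integral_def)

lemma simple_integral_Cons:
  "E \<in> \<Sigma> \<Longrightarrow> A \<in> \<Sigma> \<Longrightarrow> 0 \<le> x \<Longrightarrow>
    simple_integral \<tau> \<gamma> ((x, A) # xs) E = \<tau> (smul x (\<gamma> (E \<inter> A))) (simple_integral \<tau> \<gamma> xs E)"
  unfolding simple_integral_def
  by (cases xs) (simp_all add: tau_eps_0 smul_in_Delta_plus gamma_in_Delta_plus Int)

lemma simple_integral_in_Delta_plus:
  "simple_rep \<Sigma> xs \<Longrightarrow> E \<in> \<Sigma> \<Longrightarrow> simple_integral \<tau> \<gamma> xs E \<in> Delta_plus"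
proof (induction xs)
  case (Cons p xs)
  from Cons.prems(1) obtain x A where "p = (x, A)" "0 \<le> x" "A \<in> \<Sigma>" "simple_rep \<Sigma> xs"
    by (rule simple_rep_ConsE)
  with Cons show ?case
    by (simp add: simple_integral_Cons tau_in_Delta_plus smul_in_Delta_plus gamma_in_Delta_plus Int)
qed (simp add: eps_0_in_Delta_plus)

lemma simple_integral_split:
  assumes "simple_rep \<Sigma> xs" "E \<in> \<Sigma>" "C \<in> \<Sigma>"
  shows "simple_integral \<tau> \<gamma> xs E =
    \<tau> (simple_integral \<tau> \<gamma> xs (E \<inter> C)) (simple_integral \<tau> \<gamma> xs (E - C))"
  using assms(1)
proof (induction xs)
  case Nil
  then show ?case by (simp add: tau_eps_0 eps_0_in_Delta_plus)
next
  case (Cons p xs)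
  from Cons.prems obtain x A where p: "p = (x, A)" "0 \<le> x" "A \<in> \<Sigma>" "simple_rep \<Sigma> xs"
    by (rule simple_rep_ConsE)
  have sets: "E \<inter> C \<in> \<Sigma>" "E - C \<in> \<Sigma>" "E \<inter> C \<inter> A \<in> \<Sigma>" "(E - C) \<inter> A \<in> \<Sigma>"
    using assms p by (auto intro: Int Diff)
  have "E \<inter> A \<inter> C = E \<inter> C \<inter> A" "E \<inter> A - C = (E - C) \<inter> A" by auto
  then have gamma: "\<gamma> (E \<inter> A) = \<tau> (\<gamma> (E \<inter> C \<inter> A)) (\<gamma> ((E - C) \<inter> A))"
    using gamma_split[of "E \<inter> A" C] assms p by (simp add: Int)
  let ?smul = "\<lambda>D. smul x (\<gamma> (D \<inter> A))" and ?I = "simple_integral \<tau> \<gamma> xs"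
  have "simple_integral \<tau> \<gamma> (p # xs) E = \<tau> (?smul E) (?I E)"
    using assms p by (simp add: simple_integral_Cons)
  also have "\<dots> = \<tau> (\<tau> (?smul (E \<inter> C)) (?smul (E - C))) (\<tau> (?I (E \<inter> C)) (?I (E - C)))"
    using gamma sets p Cons.IH by (simp add: smul_tau gamma_in_Delta_plus)
  also have "\<dots> = \<tau> (\<tau> (?smul (E \<inter> C)) (?I (E \<inter> C))) (\<tau> (?smul (E - C)) (?I (E - C)))"
    using sets p by (intro triangle_function_interchange[OF triangle]
        smul_in_Delta_plus gamma_in_Delta_plus simple_integral_in_Delta_plus)
  also have "\<dots> = \<tau> (simple_integral \<tau> \<gamma> (p # xs) (E \<inter> C)) (simple_integral \<tau> \<gamma> (p # xs) (E - C))"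
    using sets p by (simp add: simple_integral_Cons)
  finally show ?case .
qed

lemma simple_integral_disjoint:
  "simple_rep \<Sigma> xs \<Longrightarrow> D \<in> \<Sigma> \<Longrightarrow> \<forall>p\<in>set xs. D \<inter> snd p = {} \<Longrightarrow>
    simple_integral \<tau> \<gamma> xs D = eps 0"
proof (induction xs)
  case (Cons p xs)
  from Cons.prems(1) obtain x A where "p = (x, A)" "0 \<le> x" "A \<in> \<Sigma>" "simple_rep \<Sigma> xs"
    by (rule simple_rep_ConsE)
  with Cons show ?case
    by (simp add: simple_integral_Cons gamma_empty smul_eps_0 tau_eps_0 eps_0_in_Delta_plus)
qed simp

lemma simple_integral_Cons_subset:
  assumes "simple_rep \<Sigma> ((x, A) # xs)" "D \<in> \<Sigma>" "D \<subseteq> A"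
  shows "simple_integral \<tau> \<gamma> ((x, A) # xs) D = smul x (\<gamma> D)"
proof -
  from assms(1) have "0 \<le> x" "A \<in> \<Sigma>" "simple_rep \<Sigma> xs" "\<forall>p\<in>set xs. A \<inter> snd p = {}"
    by (simp_all add: simple_rep_Cons)
  moreover from this assms have "simple_integral \<tau> \<gamma> xs D = eps 0"
    by (intro simple_integral_disjoint) auto
  moreover have "D \<inter> A = D" using assms by auto
  ultimately show ?thesis
    using assms by (simp add: simple_integral_Cons tau_eps_0 smul_in_Delta_plus gamma_in_Delta_plus)
qed

lemma simple_integral_Cons_disjoint:
  assumes "simple_rep \<Sigma> ((x, A) # xs)" "D \<in> \<Sigma>" "D \<inter> A = {}"
  shows "simple_integral \<tau> \<gamma> ((x, A) # xs) D = simple_integral \<tau> \<gamma> xs D"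
  using assms
  by (simp add: simple_rep_Cons simple_integral_Cons gamma_empty smul_eps_0 eps_0_tau
      simple_integral_in_Delta_plus)

lemma simple_integral_empty: "simple_rep \<Sigma> xs \<Longrightarrow> simple_integral \<tau> \<gamma> xs {} = eps 0"
  by (rule simple_integral_disjoint) auto

lemma simple_integral_Cons_split:
  assumes "simple_rep \<Sigma> ((x, A) # xs)" "E \<in> \<Sigma>"
  shows "simple_integral \<tau> \<gamma> ((x, A) # xs) E =
    \<tau> (smul x (\<gamma> (E \<inter> A))) (simple_integral \<tau> \<gamma> xs (E - A))"
proof -
  have "A \<in> \<Sigma>" using assms(1) by (simp add: simple_rep_Cons)
  moreover have "(E - A) \<inter> A = {}" by blast
  ultimately show ?thesis
    using assms simple_integral_split[OF assms(1,2), of A]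
    by (simp add: simple_integral_Cons_subset simple_integral_Cons_disjoint Int Diff)
qed

lemma simple_integral_le_smul:
  assumes "simple_rep \<Sigma> ys" "D \<in> \<Sigma>" "0 \<le> c" "\<forall>w\<in>D. c \<le> simple_val ys w"
  shows "simple_integral \<tau> \<gamma> ys D \<le> smul c (\<gamma> D)"
  using assms
proof (induction ys arbitrary: D)
  case Nil
  show ?case
  proof (cases "D = {}")
    case True
    then show ?thesis using Nil.prems(3) by (simp add: gamma_empty smul_eps_0)
  next
    case False
    with Nil.prems(3,4) have "c = 0" by force
    then show ?thesis by (simp add: smul_def)
  qed
next
  case (Cons p ys)
  from Cons.prems(1) obtain y B where p: "p = (y, B)" "0 \<le> y" "B \<in> \<Sigma>" "simple_rep \<Sigma> ys"
    by (rule simple_rep_ConsE)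
  have sets: "D \<inter> B \<in> \<Sigma>" "D - B \<in> \<Sigma>" using Cons.prems p by (auto intro: Int Diff)
  have "smul y (\<gamma> (D \<inter> B)) \<le> smul c (\<gamma> (D \<inter> B))"
  proof (cases "D \<inter> B = {}")
    case True
    then show ?thesis using p Cons.prems by (simp add: gamma_empty smul_eps_0)
  next
    case False
    then obtain w where w: "w \<in> D" "w \<in> B" by auto
    then have "simple_val (p # ys) w = y" using simple_val_eq[OF Cons.prems(1), of y B w] p(1) by simp
    with w Cons.prems(4) have "c \<le> y" by auto
    then show ?thesis using smul_antimono[OF Cons.prems(3) _ gamma_in_Delta_plus[OF sets(1)]] by blast
  qed
  moreover have "simple_integral \<tau> \<gamma> ys (D - B) \<le> smul c (\<gamma> (D - B))"
    using Cons.prems(4) p(1) by (intro Cons.IH p(4) sets(2) Cons.prems(3)) (auto simp: simple_val_Cons)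
  ultimately have "\<tau> (smul y (\<gamma> (D \<inter> B))) (simple_integral \<tau> \<gamma> ys (D - B))
      \<le> \<tau> (smul c (\<gamma> (D \<inter> B))) (smul c (\<gamma> (D - B)))"
    using sets p Cons.prems(3)
    by (intro triangle_function_mono[OF triangle] smul_in_Delta_plus gamma_in_Delta_plus
        simple_integral_in_Delta_plus)
  also have "\<dots> = smul c (\<gamma> D)"
    using gamma_split[OF Cons.prems(2) p(3)] sets Cons.prems(3) by (simp add: smul_tau gamma_in_Delta_plus)
  finally show ?case
    using simple_integral_Cons_split Cons.prems(1,2) p(1) by simp
qed

lemma simple_integral_antimono:
  assumes "simple_rep \<Sigma> xs" "simple_rep \<Sigma> ys" "E \<in> \<Sigma>" "\<forall>w\<in>E. simple_val xs w \<le> simple_val ys w"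
  shows "simple_integral \<tau> \<gamma> ys E \<le> simple_integral \<tau> \<gamma> xs E"
  using assms
proof (induction xs arbitrary: E)
  case Nil
  then show ?case using Delta_plus_le_eps_0[OF simple_integral_in_Delta_plus] by simp
next
  case (Cons p xs)
  from Cons.prems(1) obtain x A where p: "p = (x, A)" "0 \<le> x" "A \<in> \<Sigma>" "simple_rep \<Sigma> xs"
    by (rule simple_rep_ConsE)
  have sets: "E \<inter> A \<in> \<Sigma>" "E - A \<in> \<Sigma>" using Cons.prems p by (auto intro: Int Diff)
  have "simple_integral \<tau> \<gamma> ys (E \<inter> A) \<le> smul x (\<gamma> (E \<inter> A))"
  proof (rule simple_integral_le_smul[OF Cons.prems(2) sets(1) p(2)], intro ballI)
    fix w assume w: "w \<in> E \<inter> A"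
    then have "simple_val (p # xs) w = x" using simple_val_eq[OF Cons.prems(1), of x A w] p(1) by simp
    then show "x \<le> simple_val ys w" using Cons.prems(4) w by auto
  qed
  moreover have "simple_integral \<tau> \<gamma> ys (E - A) \<le> simple_integral \<tau> \<gamma> xs (E - A)"
    using Cons.prems(4) p(1) by (intro Cons.IH p(4) Cons.prems(2) sets(2)) (auto simp: simple_val_Cons)
  ultimately have "\<tau> (simple_integral \<tau> \<gamma> ys (E \<inter> A)) (simple_integral \<tau> \<gamma> ys (E - A))
      \<le> \<tau> (smul x (\<gamma> (E \<inter> A))) (simple_integral \<tau> \<gamma> xs (E - A))"
    using sets p Cons.prems(2)
    by (intro triangle_function_mono[OF triangle] smul_in_Delta_plus gamma_in_Delta_plus
        simple_integral_in_Delta_plus)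
  then show ?case
    using simple_integral_split[OF Cons.prems(2,3) p(3)] simple_integral_Cons_split Cons.prems(1,3) p(1)
    by simp
qed

lemma simple_integrals_subset: "E \<in> \<Sigma> \<Longrightarrow> simple_integrals \<tau> \<Sigma> \<gamma> f E \<subseteq> Delta_plus"
  by (auto simp: simple_integrals_def simple_integral_in_Delta_plus)

lemma eps_0_in_simple_integrals: "eps 0 \<in> simple_integrals \<tau> \<Sigma> \<gamma> f E"
  unfolding simple_integrals_def by (rule CollectI, rule exI[of _ "[]"]) simp

lemma simple_integrals_nonempty: "simple_integrals \<tau> \<Sigma> \<gamma> f E \<noteq> {}"
  using eps_0_in_simple_integrals by blast

lemma simple_integrals_down_directed:
  assumes "E \<in> \<Sigma>"
  shows "down_directed (simple_integrals \<tau> \<Sigma> \<gamma> f E)"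
  unfolding down_directed_def
proof (intro ballI)
  fix a b assume "a \<in> simple_integrals \<tau> \<Sigma> \<gamma> f E" "b \<in> simple_integrals \<tau> \<Sigma> \<gamma> f E"
  then obtain xs ys where a: "a = simple_integral \<tau> \<gamma> xs E"
    and b: "b = simple_integral \<tau> \<gamma> ys E" and reps: "simple_rep \<Sigma> xs" "simple_rep \<Sigma> ys"
    and below: "\<forall>w\<in>E. ennreal (simple_val xs w) \<le> f w" "\<forall>w\<in>E. ennreal (simple_val ys w) \<le> f w"
    unfolding simple_integrals_def by blast
  note zs = simple_max[OF reps]
  have "simple_integral \<tau> \<gamma> (simple_max xs ys) E \<in> simple_integrals \<tau> \<Sigma> \<gamma> f E"
    using zs below unfolding simple_integrals_def by (auto simp: max_def)
  moreover have "simple_integral \<tau> \<gamma> (simple_max xs ys) E \<le> a"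
    "simple_integral \<tau> \<gamma> (simple_max xs ys) E \<le> b"
    unfolding a b using reps zs assms by (auto intro!: simple_integral_antimono)
  ultimately show "\<exists>c\<in>simple_integrals \<tau> \<Sigma> \<gamma> f E. c \<le> a \<and> c \<le> b" by blast
qed

lemma gamma_integral_eq_left_Inf:
  "E \<in> \<Sigma> \<Longrightarrow> gamma_integral \<tau> \<Sigma> \<gamma> f E = left_Inf (simple_integrals \<tau> \<Sigma> \<gamma> f E)"
  unfolding gamma_integral_def
  by (rule Delta_Inf_eq_left_Inf[OF simple_integrals_subset]) (auto intro: eps_0_in_simple_integrals)

lemma gamma_integral_in_Delta_plus: "E \<in> \<Sigma> \<Longrightarrow> gamma_integral \<tau> \<Sigma> \<gamma> f E \<in> Delta_plus"
  using gamma_integral_eq_left_Inf left_Inf_in_Delta_plus[OF simple_integrals_subset]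
    eps_0_in_simple_integrals by fastforce

lemma gamma_integral_empty: "gamma_integral \<tau> \<Sigma> \<gamma> f {} = eps 0"
proof -
  have "simple_integrals \<tau> \<Sigma> \<gamma> f {} \<subseteq> {eps 0}"
    by (auto simp: simple_integrals_def simple_integral_empty)
  with eps_0_in_simple_integrals have "simple_integrals \<tau> \<Sigma> \<gamma> f {} = {eps 0}" by blast
  moreover have "left_Inf {eps 0} = eps 0"
    using left_Inf_le[of "{eps 0}" "eps 0"] left_Inf_greatest[of "{eps 0}" "eps 0"]
    by (simp add: eps_0_in_Delta_plus antisym)
  ultimately show ?thesis by (simp add: gamma_integral_eq_left_Inf)
qed

lemma simple_integral_Un:
  assumes "simple_rep \<Sigma> xs" "E \<in> \<Sigma>" "F \<in> \<Sigma>" "E \<inter> F = {}"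
  shows "simple_integral \<tau> \<gamma> xs (E \<union> F) = \<tau> (simple_integral \<tau> \<gamma> xs E) (simple_integral \<tau> \<gamma> xs F)"
proof -
  have "(E \<union> F) \<inter> E = E" "(E \<union> F) - E = F" using assms(4) by blast+
  then show ?thesis using simple_integral_split[OF assms(1) Un[OF assms(2,3)] assms(2)] by simp
qed

lemma gamma_integral_le:
  "E \<in> \<Sigma> \<Longrightarrow> G \<in> simple_integrals \<tau> \<Sigma> \<gamma> f E \<Longrightarrow> gamma_integral \<tau> \<Sigma> \<gamma> f E \<le> G"
  unfolding gamma_integral_eq_left_Inf
  by (rule left_Inf_le[OF simple_integrals_subset simple_integrals_nonempty])

lemma gamma_integral_greatest:
  "E \<in> \<Sigma> \<Longrightarrow> K \<in> Delta_plus \<Longrightarrow> (\<And>G. G \<in> simple_integrals \<tau> \<Sigma> \<gamma> f E \<Longrightarrow> K \<le> G) \<Longrightarrow>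
    K \<le> gamma_integral \<tau> \<Sigma> \<gamma> f E"
  unfolding gamma_integral_eq_left_Inf
  by (rule left_Inf_greatest[OF simple_integrals_subset simple_integrals_nonempty])

lemma gamma_integral_Un_ge:
  assumes E: "E \<in> \<Sigma>" and F: "F \<in> \<Sigma>" and disj: "E \<inter> F = {}"
  shows "\<tau> (gamma_integral \<tau> \<Sigma> \<gamma> f E) (gamma_integral \<tau> \<Sigma> \<gamma> f F) \<le> gamma_integral \<tau> \<Sigma> \<gamma> f (E \<union> F)"
proof (rule gamma_integral_greatest[OF Un[OF E F]])
  show "\<tau> (gamma_integral \<tau> \<Sigma> \<gamma> f E) (gamma_integral \<tau> \<Sigma> \<gamma> f F) \<in> Delta_plus"
    using E F by (intro tau_in_Delta_plus gamma_integral_in_Delta_plus)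
next
  fix G assume "G \<in> simple_integrals \<tau> \<Sigma> \<gamma> f (E \<union> F)"
  then obtain xs where G: "G = simple_integral \<tau> \<gamma> xs (E \<union> F)" and xs: "simple_rep \<Sigma> xs"
    and below: "\<forall>w\<in>E \<union> F. ennreal (simple_val xs w) \<le> f w"
    unfolding simple_integrals_def by blast
  have "simple_integral \<tau> \<gamma> xs E \<in> simple_integrals \<tau> \<Sigma> \<gamma> f E"
    "simple_integral \<tau> \<gamma> xs F \<in> simple_integrals \<tau> \<Sigma> \<gamma> f F"
    using xs below unfolding simple_integrals_def by auto
  with E F have "gamma_integral \<tau> \<Sigma> \<gamma> f E \<le> simple_integral \<tau> \<gamma> xs E"
    "gamma_integral \<tau> \<Sigma> \<gamma> f F \<le> simple_integral \<tau> \<gamma> xs F"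
    by (simp_all add: gamma_integral_le)
  with E F xs show "\<tau> (gamma_integral \<tau> \<Sigma> \<gamma> f E) (gamma_integral \<tau> \<Sigma> \<gamma> f F) \<le> G"
    unfolding G simple_integral_Un[OF xs E F disj]
    by (intro triangle_function_mono[OF triangle] simple_integral_in_Delta_plus
        gamma_integral_in_Delta_plus)
qed

lemma gamma_integral_Un_le:
  assumes continuous: "continuous_tf \<tau>"
    and E: "E \<in> \<Sigma>" and F: "F \<in> \<Sigma>" and disj: "E \<inter> F = {}"
  shows "gamma_integral \<tau> \<Sigma> \<gamma> f (E \<union> F) \<le> \<tau> (gamma_integral \<tau> \<Sigma> \<gamma> f E) (gamma_integral \<tau> \<Sigma> \<gamma> f F)"
  unfolding gamma_integral_eq_left_Inf[OF E] gamma_integral_eq_left_Inf[OF F]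
proof (rule left_Inf_tau_greatest[OF triangle continuous
      simple_integrals_subset[OF E] simple_integrals_nonempty simple_integrals_down_directed[OF E]
      simple_integrals_subset[OF F] simple_integrals_nonempty simple_integrals_down_directed[OF F]
      gamma_integral_in_Delta_plus[OF Un[OF E F]]])
  fix a b assume "a \<in> simple_integrals \<tau> \<Sigma> \<gamma> f E" "b \<in> simple_integrals \<tau> \<Sigma> \<gamma> f F"
  then obtain xs ys where a: "a = simple_integral \<tau> \<gamma> xs E" and b: "b = simple_integral \<tau> \<gamma> ys F"
    and reps: "simple_rep \<Sigma> xs" "simple_rep \<Sigma> ys"
    and below: "\<forall>w\<in>E. ennreal (simple_val xs w) \<le> f w" "\<forall>w\<in>F. ennreal (simple_val ys w) \<le> f w"
    unfolding simple_integrals_def by blast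
  obtain zs where zs: "simple_rep \<Sigma> zs"
    and on_E: "\<And>w. w \<in> E \<Longrightarrow> simple_val zs w = simple_val xs w"
    and on_F: "\<And>w. w \<in> F \<Longrightarrow> simple_val zs w = simple_val ys w"
    using simple_rep_glue[OF reps E F disj] by blast
  have "simple_integral \<tau> \<gamma> zs (E \<union> F) \<in> simple_integrals \<tau> \<Sigma> \<gamma> f (E \<union> F)"
    using zs below on_E on_F unfolding simple_integrals_def by auto
  then have "gamma_integral \<tau> \<Sigma> \<gamma> f (E \<union> F) \<le> simple_integral \<tau> \<gamma> zs (E \<union> F)"
    by (rule gamma_integral_le[OF Un[OF E F]])
  also have "\<dots> = \<tau> (simple_integral \<tau> \<gamma> zs E) (simple_integral \<tau> \<gamma> zs F)"
    by (rule simple_integral_Un[OF zs E F disj])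
  also have "\<dots> \<le> \<tau> a b"
    unfolding a b using zs reps E F on_E on_F
    by (intro triangle_function_mono[OF triangle] simple_integral_in_Delta_plus
        simple_integral_antimono) auto
  finally show "gamma_integral \<tau> \<Sigma> \<gamma> f (E \<union> F) \<le> \<tau> a b" .
qed

end

theorem theorem5p6:
  fixes \<tau> :: "dist \<Rightarrow> dist \<Rightarrow> dist" and \<Omega> :: "'a set" and \<Sigma> :: "'a set set"
    and \<gamma> :: "'a set \<Rightarrow> dist" and f :: "'a \<Rightarrow> ennreal"
  assumes "triangle_function \<tau>" and "continuous_tf \<tau>" and "distributive_tf \<tau>"
    and "\<Omega> \<noteq> {}" and "sigma_ring \<Omega> \<Sigma>"
    and "decomposable_measure \<tau> \<Sigma> \<gamma>" and "cont_from_below \<Sigma> \<gamma>"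
    and "measurable_fn \<Omega> \<Sigma> f"
    and "\<forall>E\<in>\<Sigma>. gamma_integrable \<tau> \<Sigma> \<gamma> f E"
  shows "decomposable_measure \<tau> \<Sigma> (\<lambda>E. gamma_integral \<tau> \<Sigma> \<gamma> f E)"
proof -
  have "ring_of_sets \<Omega> \<Sigma>" using \<open>sigma_ring \<Omega> \<Sigma>\<close> unfolding sigma_ring_def by blast
  then interpret tau_measure \<Omega> \<Sigma> \<tau> \<gamma>
    using assms(1,3,6) by (intro tau_measure.intro tau_measure_axioms.intro)
  show ?thesis
    unfolding decomposable_measure_def
  proof (intro conjI ballI impI)
    fix E F assume "E \<in> \<Sigma>" "F \<in> \<Sigma>" "E \<inter> F = {}"
    with gamma_integral_Un_le[OF \<open>continuous_tf \<tau>\<close>] gamma_integral_Un_ge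
    show "gamma_integral \<tau> \<Sigma> \<gamma> f (E \<union> F) =
        \<tau> (gamma_integral \<tau> \<Sigma> \<gamma> f E) (gamma_integral \<tau> \<Sigma> \<gamma> f F)"
      by (blast intro: antisym)
  qed (simp_all add: gamma_integral_in_Delta_plus gamma_integral_empty)
qed

end
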